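(* Let $(\mathcal{X},d_{\mathcal{X}})$ and $(\mathcal{Y},d_{\mathcal{Y}})$ be metric spaces and $(X,Y)\sim\mathbb{G}$ on $\mathcal{X}\times\mathcal{Y}$. Assume: (i) $\mathcal{L}_n=\{(X_1,Y_1),\ldots,(X_n,Y_n)\}$ consists of $n$ i.i.d. copies of $(X,Y)$, independent of $(X,Y)$; (ii) for $\mathbb{G}$-a.e. $x$ there exists a unique conditional Fréchet mean $m(x)=\arg\min_{y\in\mathcal{Y}}\mathsf{E}[d_{\mathcal{Y}}(Y,y)^2\mid X=x]$; (iii) the cumulative distribution function $F_R$ of $R=d_{\mathcal{Y}}(Y,m(X))$ is continuous on $\mathbb{R}$; (iv) $d_{\mathcal{Y}}(m(X),\widehat{m}(X))\to0$ in probability as $n\to\infty$. Then, as $n\to\infty$, $$\Delta_n:=\sup_{t\in\mathbb{R}}\big|\mathsf{P}\big(d_{\mathcal{Y}}(Y,\widehat{m}(X))<t\,\big|\,\mathcal{L}_n\big)-F_R(t)\big|\to0$$ in probability.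
   Context: $\widehat{m}$ denotes a random forest (more generally, a bagged regression estimator with values in $\mathcal{Y}$) trained on the sample $\mathcal{L}_n$. *)

theory Defs
  imports "HOL-Probability.Probability"
begin

definition sample_law :: "nat \<Rightarrow> ('x \<times> 'y) measure \<Rightarrow> (nat \<Rightarrow> 'x \<times> 'y) measure" where
  "sample_law n G = PiM {..<n} (\<lambda>_. G)"

text \<open>Joint law of (L_n, Theta, (X,Y)): sample, auxiliary randomness of the forest, and an
  independent new observation.\<close>
definition joint_law :: "nat \<Rightarrow> ('x \<times> 'y) measure \<Rightarrow> 't measure
    \<Rightarrow> ((nat \<Rightarrow> 'x \<times> 'y) \<times> 't \<times> ('x \<times> 'y)) measure" where
  "joint_law n G Q = sample_law n G \<Otimes>\<^sub>M (Q \<Otimes>\<^sub>M G)"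

definition X_law :: "('x::topological_space \<times> 'y) measure \<Rightarrow> 'x measure" where
  "X_law G = distr G borel fst"

text \<open>Conditional Frechet functional y \<mapsto> E[d(Y,y)^2 | X = x] w.r.t. a regular conditional law K.\<close>
definition frechet_fun :: "('x \<Rightarrow> 'y::metric_space measure) \<Rightarrow> 'x \<Rightarrow> 'y \<Rightarrow> ennreal" where
  "frechet_fun K x y = (\<integral>\<^sup>+ y'. ennreal ((dist y' y)\<^sup>2) \<partial>K x)"

definition F_R :: "('x \<times> 'y::metric_space) measure \<Rightarrow> ('x \<Rightarrow> 'y) \<Rightarrow> real \<Rightarrow> real" where
  "F_R G m t = measure G {z \<in> space G. dist (snd z) (m (fst z)) \<le> t}"

text \<open>Conditional probability P(d(Y, mhat(X)) < t | L_n = l), integrating out (Theta, X, Y).\<close>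
definition cond_prob :: "('t measure) \<Rightarrow> ('x \<times> 'y::metric_space) measure
    \<Rightarrow> ('t \<Rightarrow> 'x \<Rightarrow> 'y) \<Rightarrow> real \<Rightarrow> real" where
  "cond_prob Q G mh t = measure (Q \<Otimes>\<^sub>M G)
      {(\<theta>, z) \<in> space (Q \<Otimes>\<^sub>M G). dist (snd z) (mh \<theta> (fst z)) < t}"

definition Delta :: "('t measure) \<Rightarrow> ('x \<times> 'y::metric_space) measure
    \<Rightarrow> ('x \<Rightarrow> 'y) \<Rightarrow> ('t \<Rightarrow> 'x \<Rightarrow> 'y) \<Rightarrow> real" where
  "Delta Q G m mh = (SUP t::real. \<bar>cond_prob Q G mh t - F_R G m t\<bar>)"

end

theory Submission
  imports Defs
begin

(* With W = d(Y, mhat(X)), R = d(Y, m(X)) and D = d(m(X), mhat(X)) the triangle inequality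
   gives |W - R| <= D, so for every t and every delta < d, conditionally on the sample,
     |P(W < t) - F_R(t)| <= F_R(t + d) - F_R(t - d) + P(D > delta).
   F_R is monotone, bounded and continuous, hence uniformly continuous, which makes the first
   term uniformly small in t. The second term is a section of the joint probability P(D > delta),
   which tends to 0 by consistency, so by Fubini and Markov's inequality it is small in
   probability over the sample. *)

lemma mono_bounded_continuous_imp_uniformly_continuous:
  fixes F :: "real \<Rightarrow> real"
  assumes mono: "mono F" and bdd: "bounded (range F)" and cont: "continuous_on UNIV F"
  shows "uniformly_continuous_on UNIV F"
  unfolding uniformly_continuous_on_def
proof (intro allI impI)
  fix e :: real assume e: "e > 0"
  define L where "L = (INF t. F t)"
  define U where "U = (SUP t. F t)"
  have below: "bdd_below (range F)" and above: "bdd_above (range F)"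
    using bdd by (auto intro: bounded_imp_bdd_below bounded_imp_bdd_above)
  have LU: "L \<le> F t" "F t \<le> U" for t
    unfolding L_def U_def using below above by (auto intro: cINF_lower cSUP_upper)
  obtain a where a: "F a < L + e"
    using cINF_less_iff[OF UNIV_not_empty below, of "L + e"] e unfolding L_def by auto
  obtain b where b: "U - e < F b"
    using less_cSUP_iff[OF UNIV_not_empty above, of "U - e"] e unfolding U_def by auto
  have "uniformly_continuous_on {a - 1..b + 1} F"
    by (intro compact_uniformly_continuous continuous_on_subset[OF cont]) auto
  then obtain d0 where d0: "d0 > 0"
    and close: "\<And>x x'. x \<in> {a - 1..b + 1} \<Longrightarrow> x' \<in> {a - 1..b + 1} \<Longrightarrow> dist x' x < d0
                  \<Longrightarrow> dist (F x') (F x) < e"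
    using e unfolding uniformly_continuous_on_def by metis
  show "\<exists>d>0. \<forall>x\<in>UNIV. \<forall>x'\<in>UNIV. dist x' x < d \<longrightarrow> dist (F x') (F x) < e"
  proof (intro exI[of _ "min d0 1"] conjI ballI impI)
    fix x x' :: real assume near: "dist x' x < min d0 1"
    \<comment> \<open>Away from the compact interval, F is trapped within e of its infimum or supremum.\<close>
    consider "x < a - 1 \<or> x' < a - 1" | "x > b + 1 \<or> x' > b + 1" | "x \<in> {a - 1..b + 1}" "x' \<in> {a - 1..b + 1}"
      by fastforce
    then show "dist (F x') (F x) < e"
    proof cases
      case 1
      then have "x \<le> a" "x' \<le> a" using near by (auto simp: dist_real_def)
      then have "F x \<le> F a" "F x' \<le> F a" by (simp_all add: monoD[OF mono])
      then show ?thesis using LU[of x] LU[of x'] a unfolding dist_real_def by linarith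
    next
      case 2
      then have "b \<le> x" "b \<le> x'" using near by (auto simp: dist_real_def)
      then have "F b \<le> F x" "F b \<le> F x'" by (simp_all add: monoD[OF mono])
      then show ?thesis using LU[of x] LU[of x'] b unfolding dist_real_def by linarith
    next
      case 3
      then show ?thesis using close near by simp
    qed
  qed (use d0 in simp)
qed

lemma uniformly_continuous_on_UNIV_increment_le:
  fixes F :: "real \<Rightarrow> real"
  assumes "uniformly_continuous_on UNIV F" and "e > 0"
  obtains d where "d > 0" and "\<And>s. F (s + d) - F (s - d) \<le> e"
proof -
  obtain d0 where "d0 > 0" and d0: "\<And>x x'. dist x' x < d0 \<Longrightarrow> dist (F x') (F x) < e"
    using assms unfolding uniformly_continuous_on_def by (metis UNIV_I)
  have "F (s + d0 / 3) - F (s - d0 / 3) \<le> e" for s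
  proof -
    have "dist (s + d0 / 3) (s - d0 / 3) < d0"
      using \<open>d0 > 0\<close> by (simp add: dist_real_def)
    then have "dist (F (s + d0 / 3)) (F (s - d0 / 3)) < e"
      by (rule d0)
    then show ?thesis
      unfolding dist_real_def by linarith
  qed
  with \<open>d0 > 0\<close> show ?thesis
    by (intro that[of "d0 / 3"]) auto
qed

lemma prob_space_sample_law: "prob_space G \<Longrightarrow> prob_space (sample_law n G)"
  unfolding sample_law_def by (rule prob_space_PiM)

lemma F_R_mono:
  assumes "prob_space G" and "(\<lambda>z. dist (snd z) (m (fst z))) \<in> borel_measurable G"
  shows "mono (F_R G m)"
proof -
  interpret prob_space G by fact
  show ?thesis
    unfolding mono_def F_R_def using assms(2) by (auto intro!: finite_measure_mono)
qed

lemma F_R_bounded: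
  assumes "prob_space G"
  shows "bounded (range (F_R G m))"
proof -
  interpret prob_space G by fact
  show ?thesis
    unfolding bounded_real F_R_def by (intro exI[of _ 1]) auto
qed

lemma F_R_eq_measure_pair:
  fixes G :: "('x \<times> 'y::metric_space) measure"
  assumes "prob_space Q" "prob_space G" "(\<lambda>z. dist (snd z) (m (fst z))) \<in> borel_measurable G"
  shows "measure (Q \<Otimes>\<^sub>M G) {(\<theta>, z) \<in> space (Q \<Otimes>\<^sub>M G). dist (snd z) (m (fst z)) \<le> s} = F_R G m s"
proof -
  interpret Q: prob_space Q by fact
  interpret G: prob_space G by fact
  have A: "{z \<in> space G. dist (snd z) (m (fst z)) \<le> s} \<in> sets G"
    using assms(3) by measurable
  have "{(\<theta>, z) \<in> space (Q \<Otimes>\<^sub>M G). dist (snd z) (m (fst z)) \<le> s}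
      = space Q \<times> {z \<in> space G. dist (snd z) (m (fst z)) \<le> s}"
    by (auto simp: space_pair_measure)
  then show ?thesis
    unfolding F_R_def measure_def
    using G.emeasure_pair_measure_Times[OF sets.top[of Q] A] by (simp add: Q.emeasure_space_1)
qed

lemma abs_measure_less_minus_cdf_le:
  fixes W R D :: "'a \<Rightarrow> real" and F :: "real \<Rightarrow> real"
  assumes "finite_measure M"
    and [measurable]: "W \<in> borel_measurable M" "R \<in> borel_measurable M" "D \<in> borel_measurable M"
    and close: "\<And>\<omega>. \<omega> \<in> space M \<Longrightarrow> \<bar>W \<omega> - R \<omega>\<bar> \<le> D \<omega>"
    and cdf: "\<And>s. measure M {\<omega> \<in> space M. R \<omega> \<le> s} = F s"
    and "mono F" "\<delta> < d" "0 \<le> d"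
  shows "\<bar>measure M {\<omega> \<in> space M. W \<omega> < t} - F t\<bar>
    \<le> F (t + d) - F (t - d) + measure M {\<omega> \<in> space M. \<delta> < D \<omega>}"
proof -
  interpret finite_measure M by fact
  define below where "below = {\<omega> \<in> space M. W \<omega> < t}"
  define far where "far = {\<omega> \<in> space M. \<delta> < D \<omega>}"
  have [measurable]: "below \<in> sets M" "far \<in> sets M"
    unfolding below_def far_def by measurable
  have "below \<subseteq> {\<omega> \<in> space M. R \<omega> \<le> t + d} \<union> far"
  proof
    fix \<omega> assume "\<omega> \<in> below"
    with close[of \<omega>] \<open>\<delta> < d\<close> show "\<omega> \<in> {\<omega> \<in> space M. R \<omega> \<le> t + d} \<union> far"
      unfolding below_def far_def by auto
  qed
  then have "measure M below \<le> measure M {\<omega> \<in> space M. R \<omega> \<le> t + d} + measure M far"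
    by (intro order.trans[OF finite_measure_mono measure_subadditive]) auto
  then have upper: "measure M below \<le> F (t + d) + measure M far"
    by (simp add: cdf)
  have "{\<omega> \<in> space M. R \<omega> \<le> t - d} \<subseteq> below \<union> far"
  proof
    fix \<omega> assume "\<omega> \<in> {\<omega> \<in> space M. R \<omega> \<le> t - d}"
    with close[of \<omega>] \<open>\<delta> < d\<close> show "\<omega> \<in> below \<union> far"
      unfolding below_def far_def by auto
  qed
  then have "measure M {\<omega> \<in> space M. R \<omega> \<le> t - d} \<le> measure M below + measure M far"
    by (intro order.trans[OF finite_measure_mono measure_subadditive]) auto
  then have lower: "F (t - d) \<le> measure M below + measure M far"
    by (simp add: cdf)
  have "F (t - d) \<le> F t" "F t \<le> F (t + d)"
    using \<open>0 \<le> d\<close> by (simp_all add: monoD[OF \<open>mono F\<close>])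
  with upper lower show ?thesis
    unfolding below_def far_def by linarith
qed

lemma Delta_le_modulus_plus_deviation:
  fixes G :: "('x::metric_space \<times> 'y::metric_space) measure" and mh :: "'t \<Rightarrow> 'x \<Rightarrow> 'y"
  assumes Q: "prob_space Q" and G: "prob_space G"
    and m_meas: "(\<lambda>z. dist (snd z) (m (fst z))) \<in> borel_measurable G"
    and W_meas: "(\<lambda>(\<theta>, z). dist (snd z) (mh \<theta> (fst z))) \<in> borel_measurable (Q \<Otimes>\<^sub>M G)"
    and D_meas: "(\<lambda>(\<theta>, z). dist (m (fst z)) (mh \<theta> (fst z))) \<in> borel_measurable (Q \<Otimes>\<^sub>M G)"
    and modulus: "\<And>s. F_R G m (s + d) - F_R G m (s - d) \<le> e"
    and "\<delta> < d" "0 \<le> d"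
  shows "Delta Q G m mh \<le>
    e + measure (Q \<Otimes>\<^sub>M G) {(\<theta>, z) \<in> space (Q \<Otimes>\<^sub>M G). \<delta> < dist (m (fst z)) (mh \<theta> (fst z))}"
proof -
  interpret QG: prob_space "Q \<Otimes>\<^sub>M G"
    using Q G by (rule prob_space_pair)
  define W where "W = (\<lambda>(\<theta>, z::'x \<times> 'y). dist (snd z) (mh \<theta> (fst z)))"
  define R where "R = (\<lambda>(\<theta>::'t, z::'x \<times> 'y). dist (snd z) (m (fst z)))"
  define D where "D = (\<lambda>(\<theta>, z::'x \<times> 'y). dist (m (fst z)) (mh \<theta> (fst z)))"
  have W_meas': "W \<in> borel_measurable (Q \<Otimes>\<^sub>M G)" and D_meas': "D \<in> borel_measurable (Q \<Otimes>\<^sub>M G)"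
    unfolding W_def D_def by (fact W_meas D_meas)+
  have R_meas: "R \<in> borel_measurable (Q \<Otimes>\<^sub>M G)"
    using measurable_comp[OF measurable_snd m_meas] by (simp add: R_def o_def split_beta')
  have close: "\<bar>W \<omega> - R \<omega>\<bar> \<le> D \<omega>" for \<omega>
    using abs_dist_diff_le[of "mh (fst \<omega>) (fst (snd \<omega>))" "snd (snd \<omega>)" "m (fst (snd \<omega>))"]
    by (simp add: W_def R_def D_def split_beta' dist_commute)
  have cdf: "measure (Q \<Otimes>\<^sub>M G) {\<omega> \<in> space (Q \<Otimes>\<^sub>M G). R \<omega> \<le> s} = F_R G m s" for s
    unfolding F_R_eq_measure_pair[OF Q G m_meas, symmetric] R_def
    by (rule arg_cong[where f = "measure _"]) auto
  have "cond_prob Q G mh t = measure (Q \<Otimes>\<^sub>M G) {\<omega> \<in> space (Q \<Otimes>\<^sub>M G). W \<omega> < t}" for t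
    unfolding cond_prob_def W_def by (rule arg_cong[where f = "measure _"]) auto
  moreover have "{(\<theta>, z) \<in> space (Q \<Otimes>\<^sub>M G). \<delta> < dist (m (fst z)) (mh \<theta> (fst z))}
      = {\<omega> \<in> space (Q \<Otimes>\<^sub>M G). \<delta> < D \<omega>}"
    unfolding D_def by auto
  moreover have "\<bar>measure (Q \<Otimes>\<^sub>M G) {\<omega> \<in> space (Q \<Otimes>\<^sub>M G). W \<omega> < t} - F_R G m t\<bar>
      \<le> e + measure (Q \<Otimes>\<^sub>M G) {\<omega> \<in> space (Q \<Otimes>\<^sub>M G). \<delta> < D \<omega>}" for t
  proof -
    have "\<bar>measure (Q \<Otimes>\<^sub>M G) {\<omega> \<in> space (Q \<Otimes>\<^sub>M G). W \<omega> < t} - F_R G m t\<bar>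
        \<le> F_R G m (t + d) - F_R G m (t - d) + measure (Q \<Otimes>\<^sub>M G) {\<omega> \<in> space (Q \<Otimes>\<^sub>M G). \<delta> < D \<omega>}"
      by (rule abs_measure_less_minus_cdf_le[OF QG.finite_measure_axioms W_meas' R_meas D_meas' close cdf
            F_R_mono[OF G m_meas] \<open>\<delta> < d\<close> \<open>0 \<le> d\<close>])
    also have "\<dots> \<le> e + measure (Q \<Otimes>\<^sub>M G) {\<omega> \<in> space (Q \<Otimes>\<^sub>M G). \<delta> < D \<omega>}"
      using modulus[of t] by (rule add_right_mono)
    finally show ?thesis .
  qed
  ultimately show ?thesis
    unfolding Delta_def by (intro cSUP_least) auto
qed

lemma measure_le_sections_Markov:
  assumes S: "finite_measure S" and M: "finite_measure M"
    and B: "B \<in> sets (S \<Otimes>\<^sub>M M)" and "0 < a"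
    and "A \<subseteq> space S" and large: "\<And>l. l \<in> A \<Longrightarrow> a < measure M (Pair l -` B)"
  shows "measure S A \<le> measure (S \<Otimes>\<^sub>M M) B / a"
proof -
  interpret S: finite_measure S by fact
  interpret M: finite_measure M by fact
  interpret SM: finite_measure "S \<Otimes>\<^sub>M M"
    using M S by (rule finite_measure_pair_measure)
  define c where "c = ennreal (1 / a)"
  have sections_meas[measurable]: "(\<lambda>l. emeasure M (Pair l -` B)) \<in> borel_measurable S"
    using B by (rule M.measurable_emeasure_Pair)
  have "A \<subseteq> {l \<in> space S. 1 \<le> c * emeasure M (Pair l -` B)}"
  proof
    fix l assume l: "l \<in> A"
    have "1 \<le> 1 / a * measure M (Pair l -` B)"
      using large[OF l] \<open>0 < a\<close> by (simp add: field_simps)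
    then have "ennreal 1 \<le> ennreal (1 / a * measure M (Pair l -` B))"
      by (rule ennreal_leI)
    also have "\<dots> = c * emeasure M (Pair l -` B)"
      unfolding c_def M.emeasure_eq_measure using \<open>0 < a\<close> by (subst ennreal_mult) auto
    finally show "l \<in> {l \<in> space S. 1 \<le> c * emeasure M (Pair l -` B)}"
      using l \<open>A \<subseteq> space S\<close> by auto
  qed
  then have "emeasure S A \<le> emeasure S {l \<in> space S. 1 \<le> c * emeasure M (Pair l -` B)}"
    by (rule emeasure_mono) measurable
  also have "\<dots> \<le> c * (\<integral>\<^sup>+ l. emeasure M (Pair l -` B) * indicator (space S) l \<partial>S)"
    using sections_meas by (intro nn_integral_Markov_inequality) auto
  also have "(\<integral>\<^sup>+ l. emeasure M (Pair l -` B) * indicator (space S) l \<partial>S) = emeasure (S \<Otimes>\<^sub>M M) B"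
    using M.emeasure_pair_measure_alt[OF B] by (auto intro!: nn_integral_cong)
  also have "c * emeasure (S \<Otimes>\<^sub>M M) B = ennreal (measure (S \<Otimes>\<^sub>M M) B / a)"
    using \<open>0 < a\<close> by (simp add: c_def SM.emeasure_eq_measure ennreal_mult[symmetric])
  finally show ?thesis
    using \<open>0 < a\<close> by (simp add: S.emeasure_eq_measure ennreal_le_iff)
qed

lemma measure_Delta_gt_le_deviation:
  fixes G :: "('x::metric_space \<times> 'y::metric_space) measure" and mh :: "'s \<Rightarrow> 't \<Rightarrow> 'x \<Rightarrow> 'y"
  assumes S: "finite_measure S" and Q: "prob_space Q" and G: "prob_space G"
    and m_meas: "(\<lambda>z. dist (snd z) (m (fst z))) \<in> borel_measurable G"
    and W_meas: "(\<lambda>(l, \<theta>, z). dist (snd z) (mh l \<theta> (fst z))) \<in> borel_measurable (S \<Otimes>\<^sub>M (Q \<Otimes>\<^sub>M G))"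
    and D_meas: "(\<lambda>(l, \<theta>, z). dist (m (fst z)) (mh l \<theta> (fst z))) \<in> borel_measurable (S \<Otimes>\<^sub>M (Q \<Otimes>\<^sub>M G))"
    and modulus: "\<And>s. F_R G m (s + d) - F_R G m (s - d) \<le> e"
    and "\<delta> < d" "0 \<le> d" "e < \<epsilon>"
  shows "measure S {l \<in> space S. \<epsilon> < Delta Q G m (mh l)}
    \<le> measure (S \<Otimes>\<^sub>M (Q \<Otimes>\<^sub>M G))
        {(l, \<theta>, z) \<in> space (S \<Otimes>\<^sub>M (Q \<Otimes>\<^sub>M G)). \<delta> < dist (m (fst z)) (mh l \<theta> (fst z))} / (\<epsilon> - e)"
proof -
  interpret QG: prob_space "Q \<Otimes>\<^sub>M G"
    using Q G by (rule prob_space_pair)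
  define far where
    "far = {(l, \<theta>, z) \<in> space (S \<Otimes>\<^sub>M (Q \<Otimes>\<^sub>M G)). \<delta> < dist (m (fst z)) (mh l \<theta> (fst z))}"
  have "far = {x \<in> space (S \<Otimes>\<^sub>M (Q \<Otimes>\<^sub>M G)).
      \<delta> < (\<lambda>(l, \<theta>, z). dist (m (fst z)) (mh l \<theta> (fst z))) x}"
    unfolding far_def by auto
  also have "\<dots> \<in> sets (S \<Otimes>\<^sub>M (Q \<Otimes>\<^sub>M G))"
    using D_meas by measurable
  finally have far_sets: "far \<in> sets (S \<Otimes>\<^sub>M (Q \<Otimes>\<^sub>M G))" .
  have "Delta Q G m (mh l) \<le> e + measure (Q \<Otimes>\<^sub>M G) (Pair l -` far)" if l: "l \<in> space S" for l
  proof -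
    have "Pair l -` far
        = {(\<theta>, z) \<in> space (Q \<Otimes>\<^sub>M G). \<delta> < dist (m (fst z)) (mh l \<theta> (fst z))}"
      using l by (auto simp: far_def space_pair_measure)
    moreover have "(\<lambda>(\<theta>, z). dist (snd z) (mh l \<theta> (fst z))) \<in> borel_measurable (Q \<Otimes>\<^sub>M G)"
      using measurable_Pair2[OF W_meas l] by (simp add: split_beta')
    moreover have "(\<lambda>(\<theta>, z). dist (m (fst z)) (mh l \<theta> (fst z))) \<in> borel_measurable (Q \<Otimes>\<^sub>M G)"
      using measurable_Pair2[OF D_meas l] by (simp add: split_beta')
    ultimately show ?thesis
      using Delta_le_modulus_plus_deviation[OF Q G m_meas _ _ modulus \<open>\<delta> < d\<close> \<open>0 \<le> d\<close>] by simp
  qed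
  then show ?thesis
    unfolding far_def[symmetric] using \<open>e < \<epsilon>\<close>
    by (intro measure_le_sections_Markov[OF S QG.finite_measure_axioms far_sets]) force+
qed

theorem lemma2:
  fixes G :: "('x::metric_space \<times> 'y::metric_space) measure"
    and K :: "'x \<Rightarrow> 'y measure"
    and m :: "'x \<Rightarrow> 'y"
    and Q :: "nat \<Rightarrow> 't measure"
    and mhat :: "nat \<Rightarrow> (nat \<Rightarrow> 'x \<times> 'y) \<Rightarrow> 't \<Rightarrow> 'x \<Rightarrow> 'y"
  assumes G: "prob_space G" "sets G = sets (borel \<Otimes>\<^sub>M borel)"
    and Q: "\<And>n. prob_space (Q n)"
    and K_kernel: "K \<in> measurable (X_law G) (prob_algebra borel)"
    and K_disint: "\<And>A. A \<in> sets G \<Longrightarrow>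
                     emeasure G A = (\<integral>\<^sup>+ x. emeasure (K x) (Pair x -` A) \<partial>X_law G)"
    and frechet_mean: "AE x in X_law G. \<forall>y. y \<noteq> m x \<longrightarrow> frechet_fun K x (m x) < frechet_fun K x y"
    and m_meas: "(\<lambda>z. dist (snd z) (m (fst z))) \<in> borel_measurable G"
    and mhat_meas: "\<And>n. (\<lambda>(l, \<theta>, z). dist (snd z) (mhat n l \<theta> (fst z)))
                       \<in> borel_measurable (joint_law n G (Q n))"
    and mhat_meas2: "\<And>n. (\<lambda>(l, \<theta>, z). dist (m (fst z)) (mhat n l \<theta> (fst z)))
                       \<in> borel_measurable (joint_law n G (Q n))"
    and F_cont: "continuous_on UNIV (F_R G m)"
    and consistent: "\<And>\<epsilon>. \<epsilon> > 0 \<Longrightarrow>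
        (\<lambda>n. measure (joint_law n G (Q n))
           {(l, \<theta>, z) \<in> space (joint_law n G (Q n)). dist (m (fst z)) (mhat n l \<theta> (fst z)) > \<epsilon>})
        \<longlonglongrightarrow> 0"
  shows "\<And>\<epsilon>. \<epsilon> > 0 \<Longrightarrow>
        (\<lambda>n. measure (sample_law n G)
           {l \<in> space (sample_law n G). Delta (Q n) G m (mhat n l) > \<epsilon>}) \<longlonglongrightarrow> 0"
proof -
  fix \<epsilon> :: real assume "\<epsilon> > 0"
  have "uniformly_continuous_on UNIV (F_R G m)"
    using F_R_mono[OF G(1) m_meas] F_R_bounded[OF G(1)] F_cont
    by (rule mono_bounded_continuous_imp_uniformly_continuous)
  then obtain d where "d > 0" and modulus: "\<And>s. F_R G m (s + d) - F_R G m (s - d) \<le> \<epsilon> / 2"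
    by (rule uniformly_continuous_on_UNIV_increment_le[where e = "\<epsilon> / 2"]) (use \<open>\<epsilon> > 0\<close> in auto)
  have bound: "measure (sample_law n G) {l \<in> space (sample_law n G). Delta (Q n) G m (mhat n l) > \<epsilon>}
      \<le> measure (joint_law n G (Q n)) {(l, \<theta>, z) \<in> space (joint_law n G (Q n)).
           dist (m (fst z)) (mhat n l \<theta> (fst z)) > d / 2} / (\<epsilon> - \<epsilon> / 2)" for n
    unfolding joint_law_def
    by (rule measure_Delta_gt_le_deviation[OF prob_space.finite_measure[OF prob_space_sample_law[OF G(1)]]
          Q G(1) m_meas mhat_meas[of n, unfolded joint_law_def] mhat_meas2[of n, unfolded joint_law_def]
          modulus])
      (use \<open>d > 0\<close> \<open>\<epsilon> > 0\<close> in auto)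
  have lim: "(\<lambda>n. measure (joint_law n G (Q n)) {(l, \<theta>, z) \<in> space (joint_law n G (Q n)).
      dist (m (fst z)) (mhat n l \<theta> (fst z)) > d / 2} / (\<epsilon> - \<epsilon> / 2)) \<longlonglongrightarrow> 0"
    using \<open>d > 0\<close> by (intro tendsto_divide_zero consistent) simp
  show "(\<lambda>n. measure (sample_law n G)
      {l \<in> space (sample_law n G). Delta (Q n) G m (mhat n l) > \<epsilon>}) \<longlonglongrightarrow> 0"
    by (rule tendsto_sandwich[OF always_eventually always_eventually tendsto_const lim])
      (simp, intro allI bound)
qed

end
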